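(* Let $(\Omega,\Sigma,\mu)$ be a measure space with $\mu$ a positive countably additive measure, let $\rho:\Omega\to[0,\infty)$ be measurable, and let $f,g_1,\dots,g_n,h$ be real-valued measurable functions on $\Omega$ with $\int_\Omega\rho|u|^2\,d\mu<\infty$ for each $u\in\{f,g_1,\dots,g_n,h\}$. Writing $\int_\Omega\rho uv\,d\mu$ for $\int_\Omega\rho(s)u(s)v(s)\,d\mu(s)$, we have \[ \sum_{i=1}^n\begin{vmatrix}\int_\Omega\rho fg_i\,d\mu & \int_\Omega\rho fh\,d\mu\\ \int_\Omega\rho g_ih\,d\mu & \int_\Omega\rho h^2\,d\mu\end{vmatrix}^2 \le \begin{vmatrix}\int_\Omega\rho f^2\,d\mu & \int_\Omega\rho fh\,d\mu\\ \int_\Omega\rho fh\,d\mu & \int_\Omega\rho h^2\,d\mu\end{vmatrix} \times\left\{\max_{1\le i\le n}\begin{vmatrix}\int_\Omega\rho g_i^2\,d\mu & \int_\Omega\rho g_ih\,d\mu\\ \int_\Omega\rho g_ih\,d\mu & \int_\Omega\rho h^2\,d\mu\end{vmatrix} +\Bigg(\sum_{1\le i\ne j\le n}\begin{vmatrix}\int_\Omega\rho g_jg_i\,d\mu & \int_\Omega\rho g_jh\,d\mu\\ \int_\Omega\rho g_ih\,d\mu & \int_\Omega\rho h^2\,d\mu\end{vmatrix}^2\Bigg)^{1/2}\right\}. \]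
   Context: $\begin{vmatrix}a&b\\c&d\end{vmatrix}=ad-bc$ denotes a $2\times2$ determinant. The sum $\sum_{1\le i\ne j\le n}$ runs over all ordered pairs $(i,j)$ with $i\ne j$. *)

theory Defs
  imports "HOL-Analysis.Analysis"
begin

definition wip :: "'a measure \<Rightarrow> ('a \<Rightarrow> real) \<Rightarrow> ('a \<Rightarrow> real) \<Rightarrow> ('a \<Rightarrow> real) \<Rightarrow> real" where
  "wip M \<rho> u v = (\<integral>s. \<rho> s * u s * v s \<partial>M)"

definition det2 :: "real \<Rightarrow> real \<Rightarrow> real \<Rightarrow> real \<Rightarrow> real" where
  "det2 a b c d = a * d - b * c"

end

theory Submission
  imports Defs
begin

text \<open>Both the weighted integral \<open>\<langle>u, v\<rangle> = \<integral> \<rho> u v d\<mu>\<close> and the determinant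
  \<open>D u v = \<langle>u, v\<rangle> \<langle>h, h\<rangle> - \<langle>u, h\<rangle> \<langle>v, h\<rangle>\<close> are symmetric positive semidefinite bilinear forms,
  the latter by the Cauchy--Schwarz inequality for the former. The claim is Bombieri's inequality
  for \<open>D\<close>: with \<open>c\<^sub>i = D f g\<^sub>i\<close> and \<open>z = \<Sum> c\<^sub>i g\<^sub>i\<close>, Cauchy--Schwarz gives
  \<open>(\<Sum> c\<^sub>i\<^sup>2)\<^sup>2 = (D z f)\<^sup>2 \<le> D f f \<cdot> D z z\<close>, and in \<open>D z z = \<Sum>\<^sub>i\<^sub>j c\<^sub>i c\<^sub>j D g\<^sub>j g\<^sub>i\<close> the diagonal
  terms are bounded by the maximum and the off-diagonal ones by Cauchy--Schwarz for finite sums.\<close>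

lemma quadratic_nonneg_imp_discriminant_le:
  fixes A B C :: real
  assumes "0 \<le> C" and nonneg: "\<And>t. 0 \<le> A - 2 * t * B + t\<^sup>2 * C"
  shows "B\<^sup>2 \<le> A * C"
proof (cases "C = 0")
  case True
  have "B = 0"
  proof (rule ccontr)
    assume "B \<noteq> 0"
    have "0 \<le> A - 2 * ((A + 1) / (2 * B)) * B" using nonneg[of "(A + 1) / (2 * B)"] True by simp
    also have "\<dots> = -1" using \<open>B \<noteq> 0\<close> by (simp add: field_simps)
    finally show False by simp
  qed
  then show ?thesis using True by simp
next
  case False
  with \<open>0 \<le> C\<close> have "0 < C" by simp
  have "0 \<le> A - 2 * (B / C) * B + (B / C)\<^sup>2 * C" by (rule nonneg)
  also have "\<dots> = A - B\<^sup>2 / C" using \<open>0 < C\<close> by (simp add: field_simps power2_eq_square)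
  finally show ?thesis using \<open>0 < C\<close> by (simp add: field_simps)
qed

lemma offdiagonal_sum_le:
  fixes c :: "'i \<Rightarrow> real" and G :: "'i \<Rightarrow> 'i \<Rightarrow> real"
  assumes "finite I"
  defines "P \<equiv> {(i, j). i \<in> I \<and> j \<in> I \<and> i \<noteq> j}"
  shows "(\<Sum>(i, j)\<in>P. c i * c j * G j i) \<le> (\<Sum>i\<in>I. (c i)\<^sup>2) * sqrt (\<Sum>(i, j)\<in>P. (G j i)\<^sup>2)"
proof -
  let ?S = "\<Sum>i\<in>I. (c i)\<^sup>2" and ?Q = "\<Sum>(i, j)\<in>P. (G j i)\<^sup>2"
  have "(\<Sum>(i, j)\<in>P. (c i * c j)\<^sup>2) \<le> (\<Sum>(i, j)\<in>I \<times> I. (c i * c j)\<^sup>2)"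
    using assms by (intro sum_mono2) auto
  also have "\<dots> = ?S\<^sup>2"
    by (simp add: sum.cartesian_product power_mult_distrib power2_eq_square sum_product mult_ac)
  finally have "(\<Sum>(i, j)\<in>P. (c i * c j)\<^sup>2) * ?Q \<le> ?S\<^sup>2 * ?Q"
    by (intro mult_right_mono) (auto intro: sum_nonneg)
  moreover have "(\<Sum>(i, j)\<in>P. c i * c j * G j i)\<^sup>2 \<le> (\<Sum>(i, j)\<in>P. (c i * c j)\<^sup>2) * ?Q"
    using Cauchy_Schwarz_ineq_sum[of "\<lambda>(i, j). c i * c j" "\<lambda>(i, j). G j i" P]
    by (simp add: case_prod_unfold)
  ultimately have "(\<Sum>(i, j)\<in>P. c i * c j * G j i) \<le> sqrt (?S\<^sup>2 * ?Q)"
    by (intro real_le_rsqrt) simp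
  also have "\<dots> = ?S * sqrt ?Q"
    by (simp add: real_sqrt_mult sum_nonneg)
  finally show ?thesis .
qed

lemma double_sum_le_diagonal_offdiagonal:
  fixes c :: "'i \<Rightarrow> real" and G :: "'i \<Rightarrow> 'i \<Rightarrow> real"
  assumes "finite I" and "I \<noteq> {}"
  defines "P \<equiv> {(i, j). i \<in> I \<and> j \<in> I \<and> i \<noteq> j}"
  shows "(\<Sum>i\<in>I. \<Sum>j\<in>I. c i * c j * G j i)
    \<le> (\<Sum>i\<in>I. (c i)\<^sup>2) * ((MAX i\<in>I. G i i) + sqrt (\<Sum>(i, j)\<in>P. (G j i)\<^sup>2))"
proof -
  have square_decomp: "I \<times> I = P \<union> (\<lambda>i. (i, i)) ` I" and "P \<inter> (\<lambda>i. (i, i)) ` I = {}"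
    unfolding P_def by auto
  moreover have "finite P"
    using \<open>finite I\<close> square_decomp by (metis finite_SigmaI finite_Un)
  ultimately have "(\<Sum>i\<in>I. \<Sum>j\<in>I. c i * c j * G j i)
      = (\<Sum>(i, j)\<in>P. c i * c j * G j i) + (\<Sum>i\<in>I. (c i)\<^sup>2 * G i i)"
    using \<open>finite I\<close>
    by (simp add: sum.cartesian_product sum.union_disjoint sum.reindex inj_on_def power2_eq_square)
  also have "(\<Sum>i\<in>I. (c i)\<^sup>2 * G i i) \<le> (\<Sum>i\<in>I. (c i)\<^sup>2 * (MAX i\<in>I. G i i))"
    using assms by (intro sum_mono mult_left_mono) auto
  finally show ?thesis
    using offdiagonal_sum_le[OF \<open>finite I\<close>, of c G] unfolding P_def
    by (simp add: sum_distrib_right distrib_left)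
qed

locale semi_inner_product =
  fixes V :: "('a \<Rightarrow> real) set" and B :: "('a \<Rightarrow> real) \<Rightarrow> ('a \<Rightarrow> real) \<Rightarrow> real"
  assumes zero_mem: "(\<lambda>_. 0) \<in> V"
    and lincomb_mem: "\<lbrakk>u \<in> V; v \<in> V\<rbrakk> \<Longrightarrow> (\<lambda>s. a * u s + b * v s) \<in> V"
    and linear_left:
      "\<lbrakk>u \<in> V; v \<in> V; w \<in> V\<rbrakk> \<Longrightarrow> B (\<lambda>s. a * u s + b * v s) w = a * B u w + b * B v w"
    and symmetric: "\<lbrakk>u \<in> V; v \<in> V\<rbrakk> \<Longrightarrow> B u v = B v u"
    and nonneg: "u \<in> V \<Longrightarrow> 0 \<le> B u u"
begin

lemma sum_mem:
  assumes "finite K" and "\<And>k. k \<in> K \<Longrightarrow> w k \<in> V"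
  shows "(\<lambda>s. \<Sum>k\<in>K. a k * w k s) \<in> V"
  using assms
proof (induction K rule: finite_induct)
  case empty
  then show ?case using zero_mem by simp
next
  case (insert k K)
  then have "(\<lambda>s. a k * w k s + 1 * (\<Sum>k\<in>K. a k * w k s)) \<in> V"
    by (intro lincomb_mem) auto
  with insert show ?case by simp
qed

lemma sum_left:
  assumes "finite K" and "\<And>k. k \<in> K \<Longrightarrow> w k \<in> V" and "v \<in> V"
  shows "B (\<lambda>s. \<Sum>k\<in>K. a k * w k s) v = (\<Sum>k\<in>K. a k * B (w k) v)"
  using assms
proof (induction K rule: finite_induct)
  case empty
  have "B (\<lambda>_. 0 * 0 + 0 * 0) v = 0"
    using linear_left[OF zero_mem zero_mem \<open>v \<in> V\<close>, of 0 0] by simp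
  then show ?case by simp
next
  case (insert k K)
  then have "B (\<lambda>s. a k * w k s + 1 * (\<Sum>k\<in>K. a k * w k s)) v
      = a k * B (w k) v + 1 * B (\<lambda>s. \<Sum>k\<in>K. a k * w k s) v"
    by (intro linear_left sum_mem) auto
  with insert show ?case by simp
qed

lemma square_lincomb:
  assumes "u \<in> V" and "v \<in> V"
  shows "B (\<lambda>s. a * u s + b * v s) (\<lambda>s. a * u s + b * v s)
    = a\<^sup>2 * B u u + 2 * a * b * B u v + b\<^sup>2 * B v v"
  using assms lincomb_mem[OF assms]
  by (simp add: linear_left symmetric[of _ "\<lambda>s. a * u s + b * v s"] symmetric[of v u]
      power2_eq_square algebra_simps)

lemma Cauchy_Schwarz:
  assumes "u \<in> V" and "v \<in> V"
  shows "(B u v)\<^sup>2 \<le> B u u * B v v"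
proof (rule quadratic_nonneg_imp_discriminant_le)
  show "0 \<le> B v v" using nonneg[OF \<open>v \<in> V\<close>] .
  fix t
  have "0 \<le> B (\<lambda>s. 1 * u s + (- t) * v s) (\<lambda>s. 1 * u s + (- t) * v s)"
    using assms by (intro nonneg lincomb_mem)
  also have "\<dots> = B u u - 2 * t * B u v + t\<^sup>2 * B v v"
    using square_lincomb[OF assms, of 1 "- t"] by simp
  finally show "0 \<le> B u u - 2 * t * B u v + t\<^sup>2 * B v v" .
qed

theorem Bombieri_inequality:
  assumes "finite I" and "I \<noteq> {}" and "f \<in> V" and g: "\<And>i. i \<in> I \<Longrightarrow> g i \<in> V"
  shows "(\<Sum>i\<in>I. (B f (g i))\<^sup>2)
    \<le> B f f * ((MAX i\<in>I. B (g i) (g i))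
        + sqrt (\<Sum>(i, j)\<in>{(i, j). i \<in> I \<and> j \<in> I \<and> i \<noteq> j}. (B (g j) (g i))\<^sup>2))"
    (is "?S \<le> B f f * ?R")
proof -
  define z where "z = (\<lambda>s. \<Sum>i\<in>I. B f (g i) * g i s)"
  have "z \<in> V"
    unfolding z_def using assms by (intro sum_mem)
  have "B z f = ?S"
    unfolding z_def using assms by (simp add: sum_left symmetric[of f] power2_eq_square)
  have "B (g i) z = (\<Sum>j\<in>I. B f (g j) * B (g j) (g i))" if "i \<in> I" for i
  proof -
    have "B (g i) z = B z (g i)" using g[OF that] \<open>z \<in> V\<close> by (rule symmetric)
    then show ?thesis using assms that by (simp add: z_def sum_left)
  qed
  then have "B z z = (\<Sum>i\<in>I. \<Sum>j\<in>I. B f (g i) * B f (g j) * B (g j) (g i))"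
    using assms \<open>z \<in> V\<close>
    by (simp add: z_def sum_left sum_distrib_left mult.assoc cong: sum.cong)
  also have "\<dots> \<le> ?S * ?R"
    using double_sum_le_diagonal_offdiagonal[OF assms(1,2), of "\<lambda>i. B f (g i)" "\<lambda>j i. B (g j) (g i)"]
    by simp
  finally have "B z z \<le> ?S * ?R" .
  have "?S\<^sup>2 \<le> B f f * B z z"
    using Cauchy_Schwarz[OF \<open>z \<in> V\<close> \<open>f \<in> V\<close>] \<open>B z f = ?S\<close> by (simp add: mult.commute)
  also have "\<dots> \<le> B f f * (?S * ?R)"
    using \<open>B z z \<le> ?S * ?R\<close> nonneg[OF \<open>f \<in> V\<close>] by (rule mult_left_mono)
  finally have "?S * ?S \<le> ?S * (B f f * ?R)"
    by (simp add: power2_eq_square mult_ac)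
  moreover have "0 \<le> B f f * ?R"
  proof -
    obtain i where "i \<in> I" using \<open>I \<noteq> {}\<close> by blast
    then have "0 \<le> B (g i) (g i)" using g by (intro nonneg)
    also have "\<dots> \<le> (MAX i\<in>I. B (g i) (g i))" using \<open>finite I\<close> \<open>i \<in> I\<close> by (intro Max_ge) auto
    finally have "0 \<le> ?R" by (intro add_nonneg_nonneg real_sqrt_ge_zero sum_nonneg) auto
    then show ?thesis using nonneg[OF \<open>f \<in> V\<close>] by simp
  qed
  ultimately show ?thesis
    by (cases "?S = 0") (auto simp: sum_nonneg less_le)
qed

end

definition gram_det ::
    "(('a \<Rightarrow> real) \<Rightarrow> ('a \<Rightarrow> real) \<Rightarrow> real) \<Rightarrow> ('a \<Rightarrow> real) \<Rightarrow> ('a \<Rightarrow> real) \<Rightarrow> ('a \<Rightarrow> real) \<Rightarrow> real"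
  where "gram_det B h u v = det2 (B u v) (B u h) (B v h) (B h h)"

lemma (in semi_inner_product) semi_inner_product_gram_det:
  assumes "h \<in> V"
  shows "semi_inner_product V (gram_det B h)"
proof
  fix u v w and a b :: real
  assume "u \<in> V" "v \<in> V" "w \<in> V"
  with assms show "gram_det B h (\<lambda>s. a * u s + b * v s) w = a * gram_det B h u w + b * gram_det B h v w"
    by (simp add: gram_det_def det2_def linear_left algebra_simps)
next
  fix u v
  assume "u \<in> V" "v \<in> V"
  with assms show "gram_det B h u v = gram_det B h v u"
    by (simp add: gram_det_def det2_def symmetric[of u v])
next
  fix u
  assume "u \<in> V"
  with assms show "0 \<le> gram_det B h u u"
    using Cauchy_Schwarz[of u h] by (simp add: gram_det_def det2_def power2_eq_square)
qed (auto intro: zero_mem lincomb_mem)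

definition weighted_L2 :: "'a measure \<Rightarrow> ('a \<Rightarrow> real) \<Rightarrow> ('a \<Rightarrow> real) set"
  where "weighted_L2 M \<rho> = {u \<in> borel_measurable M. integrable M (\<lambda>s. \<rho> s * (u s)\<^sup>2)}"

lemma integrable_weighted_product:
  assumes "\<rho> \<in> borel_measurable M" and "\<And>s. s \<in> space M \<Longrightarrow> 0 \<le> \<rho> s"
    and "u \<in> weighted_L2 M \<rho>" and "v \<in> weighted_L2 M \<rho>"
  shows "integrable M (\<lambda>s. \<rho> s * u s * v s)"
proof (rule Bochner_Integration.integrable_bound)
  show "integrable M (\<lambda>s. \<rho> s * (u s)\<^sup>2 + \<rho> s * (v s)\<^sup>2)"
    using assms by (simp add: weighted_L2_def)
  show "(\<lambda>s. \<rho> s * u s * v s) \<in> borel_measurable M"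
    using assms by (auto simp: weighted_L2_def)
  show "AE s in M. norm (\<rho> s * u s * v s) \<le> norm (\<rho> s * (u s)\<^sup>2 + \<rho> s * (v s)\<^sup>2)"
  proof (rule AE_I2)
    fix s assume "s \<in> space M"
    have "\<bar>u s * v s\<bar> \<le> (u s)\<^sup>2 + (v s)\<^sup>2"
      using sum_squares_bound[of "\<bar>u s\<bar>" "\<bar>v s\<bar>"] abs_ge_zero[of "u s * v s"]
      unfolding abs_mult power2_abs by linarith
    then have "\<rho> s * \<bar>u s * v s\<bar> \<le> \<rho> s * ((u s)\<^sup>2 + (v s)\<^sup>2)"
      using assms(2)[OF \<open>s \<in> space M\<close>] by (rule mult_left_mono)
    with assms(2)[OF \<open>s \<in> space M\<close>]
    show "norm (\<rho> s * u s * v s) \<le> norm (\<rho> s * (u s)\<^sup>2 + \<rho> s * (v s)\<^sup>2)"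
      by (simp add: abs_mult distrib_left mult.assoc)
  qed
qed

lemma semi_inner_product_wip:
  assumes "\<rho> \<in> borel_measurable M" and "\<And>s. s \<in> space M \<Longrightarrow> 0 \<le> \<rho> s"
  shows "semi_inner_product (weighted_L2 M \<rho>) (wip M \<rho>)"
proof
  show "(\<lambda>_. 0) \<in> weighted_L2 M \<rho>"
    by (simp add: weighted_L2_def)
next
  fix u v w and a b :: real
  assume u: "u \<in> weighted_L2 M \<rho>" and v: "v \<in> weighted_L2 M \<rho>" and w: "w \<in> weighted_L2 M \<rho>"
  note uv = integrable_weighted_product[OF assms u v]
  have "(\<lambda>s. \<rho> s * (a * u s + b * v s)\<^sup>2)
      = (\<lambda>s. a\<^sup>2 * (\<rho> s * (u s)\<^sup>2) + 2 * a * b * (\<rho> s * u s * v s) + b\<^sup>2 * (\<rho> s * (v s)\<^sup>2))"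
    by (simp add: power2_eq_square algebra_simps)
  then show "(\<lambda>s. a * u s + b * v s) \<in> weighted_L2 M \<rho>"
    using u v uv by (auto simp: weighted_L2_def)
  have "(\<lambda>s. \<rho> s * (a * u s + b * v s) * w s) = (\<lambda>s. a * (\<rho> s * u s * w s) + b * (\<rho> s * v s * w s))"
    by (simp add: algebra_simps)
  then show "wip M \<rho> (\<lambda>s. a * u s + b * v s) w = a * wip M \<rho> u w + b * wip M \<rho> v w"
    using integrable_weighted_product[OF assms u w] integrable_weighted_product[OF assms v w]
    by (simp add: wip_def)
next
  fix u v
  show "wip M \<rho> u v = wip M \<rho> v u"
    by (simp add: wip_def mult_ac)
next
  fix u
  show "0 \<le> wip M \<rho> u u"
    unfolding wip_def using assms(2) by (intro integral_nonneg_AE AE_I2) (simp add: mult.assoc)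
qed

theorem proposition5p1:
  fixes M :: "'a measure" and \<rho> f h :: "'a \<Rightarrow> real" and g :: "nat \<Rightarrow> 'a \<Rightarrow> real" and n :: nat
  assumes "n \<ge> 1"
    and "\<rho> \<in> borel_measurable M" and "\<And>s. s \<in> space M \<Longrightarrow> \<rho> s \<ge> 0"
    and "f \<in> borel_measurable M" and "h \<in> borel_measurable M"
    and "\<And>i. i \<in> {1..n} \<Longrightarrow> g i \<in> borel_measurable M"
    and "integrable M (\<lambda>s. \<rho> s * \<bar>f s\<bar>^2)"
    and "integrable M (\<lambda>s. \<rho> s * \<bar>h s\<bar>^2)"
    and "\<And>i. i \<in> {1..n} \<Longrightarrow> integrable M (\<lambda>s. \<rho> s * \<bar>g i s\<bar>^2)"
  shows "(\<Sum>i=1..n. (det2 (wip M \<rho> f (g i)) (wip M \<rho> f h) (wip M \<rho> (g i) h) (wip M \<rho> h h))^2)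
    \<le> det2 (wip M \<rho> f f) (wip M \<rho> f h) (wip M \<rho> f h) (wip M \<rho> h h) *
      ((MAX i\<in>{1..n}. det2 (wip M \<rho> (g i) (g i)) (wip M \<rho> (g i) h) (wip M \<rho> (g i) h) (wip M \<rho> h h))
       + sqrt (\<Sum>(i, j)\<in>{(i, j). i \<in> {1..n} \<and> j \<in> {1..n} \<and> i \<noteq> j}.
            (det2 (wip M \<rho> (g j) (g i)) (wip M \<rho> (g j) h) (wip M \<rho> (g i) h) (wip M \<rho> h h))^2))"
proof -
  have h: "h \<in> weighted_L2 M \<rho>" and f: "f \<in> weighted_L2 M \<rho>"
    and g: "\<And>i. i \<in> {1..n} \<Longrightarrow> g i \<in> weighted_L2 M \<rho>"
    using assms by (simp_all add: weighted_L2_def)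
  have "semi_inner_product (weighted_L2 M \<rho>) (gram_det (wip M \<rho>) h)"
    using semi_inner_product_wip[OF assms(2,3)] h
    by (rule semi_inner_product.semi_inner_product_gram_det)
  from semi_inner_product.Bombieri_inequality[OF this, where I = "{1..n}", OF _ _ f g] \<open>n \<ge> 1\<close>
  show ?thesis
    by (simp add: gram_det_def)
qed

end
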